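(* Let $m\ge1$, $q=2^m$, let $n$ be odd, and let $L$ and $\lambda$ be $2$-linear polynomials over $\mathbb F_{q^n}$. Assume that $\mathrm{Tr}(x^{q+1})+L(x)$ is a permutation polynomial of $\mathbb F_{q^n}$. Then $|\ker L|\le q$, and moreover: (i) if $\lambda^\prime(\ker\mathrm{Tr})=\ker\mathrm{Tr}$ and $\mathrm{Tr}(\lambda^\prime(x))=\mathrm{Tr}(x)$ for all $x\in\mathbb F_{q^n}$, then both $\mathrm{Tr}(x^{q+1})+L(\lambda(x))$ and $\mathrm{Tr}(x^{q+1})+\lambda(L(x))$ are permutation polynomials of $\mathbb F_{q^n}$; (ii) if $x\mapsto x+\mathrm{Tr}(\lambda^\prime(x))$ is a permutation of $\mathbb F_q$, then both \[\mathrm{Tr}(x^{q+1})+L(x)+L(\mathrm{Tr}(\lambda(x)))+\mathrm{Tr}(\lambda(x))^2\] and \[\mathrm{Tr}(x^{q+1})+L(x)+\mathrm{Tr}(\lambda(L(x)))+\mathrm{Tr}(\lambda(x^2))\] are permutation polynomials of $\mathbb F_{q^n}$.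
   Context: $\mathrm{Tr}$ denotes the trace map of $\mathbb F_{q^n}$ over $\mathbb F_q$. A $2$-linear polynomial over $\mathbb F_{q^n}$ has the form $\sum_{j=0}^{mn-1}a_jx^{2^j}$; its adjoint is $\sum_j(a_jx)^{2^{-j}}$, where $y\mapsto y^{2^{-j}}$ is the inverse of $y\mapsto y^{2^j}$ on $\mathbb F_{q^n}$. Polynomials are regarded as maps on $\mathbb F_{q^n}$; $\ker$ denotes the kernel of an additive map. *)

theory Defs
  imports Main
begin

text \<open>Throughout, the ambient field F_(q^n) with q = 2^m is a finite field type 'a
  with CARD('a) = 2^(m*n).  Elements of F_q are identified with the subfield
  {x. x^q = x} of F_(q^n).\<close>

definition trace :: "nat \<Rightarrow> nat \<Rightarrow> 'a::field \<Rightarrow> 'a" where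
  "trace m n x = (\<Sum>i<n. x ^ ((2 ^ m) ^ i))"

definition subfield_q :: "nat \<Rightarrow> 'a::field set" where
  "subfield_q m = {x. x ^ (2 ^ m) = x}"

definition lin2 :: "nat \<Rightarrow> nat \<Rightarrow> (nat \<Rightarrow> 'a::field) \<Rightarrow> 'a \<Rightarrow> 'a" where
  "lin2 m n a x = (\<Sum>j<m*n. a j * x ^ (2 ^ j))"

text \<open>Its adjoint sum_j (a_j x)^(2^(-j)); on F_(2^(mn)) the inverse of y \<mapsto> y^(2^j)
  is y \<mapsto> y^(2^((mn - j) mod mn)).\<close>
definition adj2 :: "nat \<Rightarrow> nat \<Rightarrow> (nat \<Rightarrow> 'a::field) \<Rightarrow> 'a \<Rightarrow> 'a" where
  "adj2 m n a x = (\<Sum>j<m*n. (a j * x) ^ (2 ^ ((m*n - j) mod (m*n))))"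

end

theory Submission
  imports Defs "HOL-Number_Theory.Residues" "HOL-Computational_Algebra.Polynomial"
begin

(*
  Write Q(x) = Tr(x^(q+1)). In characteristic 2,
    Q(y + d) = Q(y) + Q(d) + B(y, d),   B(y, d) = Tr(y^q d + y d^q).
  For d in F_q we have B(-, d) = 0 and Q(d) = d^2; for d outside F_q the map B(-, d) is
  onto F_q, because n is odd. Hence, for additive M, Q + M is a permutation iff
  M^(-1)(F_q) is contained in F_q and M(d) <> d^2 for all nonzero d in F_q. The kernel
  bound follows since ker L lies in F_q. For (i) and (ii) this criterion is checked for
  the new additive maps, using the nondegenerate pairing T(xy), T the absolute trace, to
  turn the hypotheses on the adjoint of lambda into properties of lambda itself: in (i)
  lambda fixes F_q pointwise and maps no element outside F_q into F_q; in (ii) the map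
  c |-> Tr(lambda(c)) has no nonzero fixed point in F_q.
*)

lemma poly_nonzero_somewhere:
  fixes p :: "'a::{idom,finite} poly"
  assumes "p \<noteq> 0" and "degree p < card (UNIV :: 'a set)"
  shows "\<exists>x. poly p x \<noteq> 0"
proof (rule ccontr)
  assume "\<not> ?thesis"
  then have "{x. poly p x = 0} = UNIV" by auto
  then show False using card_poly_roots_bound[OF assms(1)] assms(2) by simp
qed

(* The library's finite_field_power_card_eq_same needs the sort finite_field. *)
lemma power_card_eq_self:
  fixes x :: "'a::{field,finite}"
  shows "x ^ card (UNIV :: 'a set) = x"
proof (cases "x = 0")
  case False
  have "(\<Prod>y\<in>-{0}. x * y) = (\<Prod>y\<in>-{0}. y)"
    by (rule prod.reindex_bij_witness[of _ "\<lambda>y. y / x" "\<lambda>y. x * y"]) (use False in auto)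
  then have "x ^ card (-{0::'a}) = 1" by (simp add: prod.distrib)
  moreover have "card (UNIV :: 'a set) = Suc (card (-{0::'a}))"
    by (metis Compl_eq_Diff_UNIV card_Suc_Diff1 finite iso_tuple_UNIV_I)
  ultimately show ?thesis by simp
qed (simp add: finite_UNIV_card_ge_0)

lemma inj_iff_increments:
  "inj (f :: 'a::group_add \<Rightarrow> 'b) \<longleftrightarrow> (\<forall>y d. f (y + d) = f y \<longrightarrow> d = 0)"
proof
  assume "\<forall>y d. f (y + d) = f y \<longrightarrow> d = 0"
  then have "x = y" if "f x = f y" for x y
    using that add_minus_cancel[of y x] by (metis add_0_right)
  then show "inj f" by (rule injI)
next
  assume "inj f"
  show "\<forall>y d. f (y + d) = f y \<longrightarrow> d = 0"
  proof (intro allI impI)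
    fix y d
    assume "f (y + d) = f y"
    with \<open>inj f\<close> have "y + d = y + 0" by (simp add: injD)
    then show "d = 0" by (rule add_left_imp_eq)
  qed
qed

definition abs_trace :: "nat \<Rightarrow> 'a::field \<Rightarrow> 'a" where
  "abs_trace N x = (\<Sum>i<N. x ^ (2 ^ i))"

lemma abs_trace_zero [simp]: "abs_trace N (0::'a::field) = 0"
  by (simp add: abs_trace_def zero_power)

lemma power_two_power_add: "(x::'a::monoid_mult) ^ (2 ^ (i + j)) = (x ^ (2 ^ i)) ^ (2 ^ j)"
  by (simp add: power_add power_mult)

section \<open>Characteristic two and the Frobenius map\<close>

locale binary_field =
  fixes m n :: nat and field_type :: "'a::{field,finite} itself"
  assumes card_field: "card (UNIV :: 'a set) = 2 ^ (m * n)"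
begin

abbreviation Fq :: "'a set" where "Fq \<equiv> subfield_q m"

lemma extension_degree_pos: "0 < m * n"
proof (rule ccontr)
  assume "\<not> 0 < m * n"
  then have "card (UNIV :: 'a set) = 1" using card_field by simp
  then show False by (metis card_1_singletonE UNIV_I singletonD zero_neq_one)
qed

lemma CHAR_eq_2: "CHAR('a) = 2"
proof -
  have "prime CHAR('a)" by (simp add: finite_imp_CHAR_pos prime_CHAR_semidom)
  moreover have "CHAR('a) dvd 2 ^ (m * n)" using CHAR_dvd_CARD[where 'a='a] card_field by simp
  ultimately have "CHAR('a) dvd 2" using prime_dvd_power by blast
  with \<open>prime CHAR('a)\<close> show ?thesis using primes_dvd_imp_eq two_is_prime_nat by blast
qed

lemma add_self [simp]: "x + x = (0::'a)"
  using uminus_CHAR_2[OF CHAR_eq_2, of x] by (metis add.right_inverse)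

lemma add_eq_0_iff_eq: "(x::'a) + y = 0 \<longleftrightarrow> x = y"
  by (metis add_self add_left_imp_eq)

lemma frobenius_add: "((x::'a) + y) ^ (2 ^ k) = x ^ (2 ^ k) + y ^ (2 ^ k)"
  by (rule freshmans_dream') (simp_all add: CHAR_eq_2)

lemma frobenius_sum: "(\<Sum>i\<in>A. f i) ^ (2 ^ k) = (\<Sum>i\<in>A. (f i :: 'a) ^ (2 ^ k))"
  by (rule freshmans_dream_sum') (simp_all add: CHAR_eq_2)

lemma square_add: "((x::'a) + y) ^ 2 = x ^ 2 + y ^ 2"
  using frobenius_add[of x y 1] by simp

lemma power_card: "(x::'a) ^ (2 ^ (m * n)) = x"
  using power_card_eq_self[of x] by (simp add: card_field)

lemma power_card_power: "(x::'a) ^ (2 ^ (m * n * t)) = x"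
proof (induction t)
  case (Suc t)
  then show ?case
    using power_card[of x] by (simp add: power_two_power_add)
qed simp

lemma power_two_power_mod: "(x::'a) ^ (2 ^ j) = x ^ (2 ^ (j mod (m * n)))"
  using power_two_power_add[of x "m * n * (j div (m * n))" "j mod (m * n)"]
  by (simp add: power_card_power)

lemma power_q_inverse:
  "((x::'a) ^ (2 ^ (m * (n - 1)))) ^ (2 ^ m) = x" "(x ^ (2 ^ m)) ^ (2 ^ (m * (n - 1))) = x"
proof -
  have "m * (n - 1) + m = m * n" "m + m * (n - 1) = m * n"
    using extension_degree_pos by (simp_all add: algebra_simps)
  then show "(x ^ (2 ^ (m * (n - 1)))) ^ (2 ^ m) = x" "(x ^ (2 ^ m)) ^ (2 ^ (m * (n - 1))) = x"
    using power_card[of x] by (metis power_two_power_add)+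
qed

lemma mem_Fq_iff: "(x::'a) \<in> Fq \<longleftrightarrow> x ^ (2 ^ m) = x"
  by (simp add: subfield_q_def)

lemma Fq_power: "(x::'a) \<in> Fq \<Longrightarrow> x ^ (2 ^ (m * i)) = x"
  by (induction i) (simp_all add: mem_Fq_iff power_add power_mult)

lemma Fq_add: "x \<in> Fq \<Longrightarrow> y \<in> Fq \<Longrightarrow> (x::'a) + y \<in> Fq"
  by (simp add: mem_Fq_iff frobenius_add)

lemma Fq_divide: "x \<in> Fq \<Longrightarrow> y \<in> Fq \<Longrightarrow> (x::'a) / y \<in> Fq"
  by (simp add: mem_Fq_iff power_divide)

lemma Fq_square: "x \<in> Fq \<Longrightarrow> (x::'a) ^ 2 \<in> Fq"
  by (simp add: mem_Fq_iff flip: power_mult) (metis power_mult mult.commute)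

lemma Fq_zero: "(0::'a) \<in> Fq"
  by (simp add: mem_Fq_iff)

section \<open>Relative and absolute trace\<close>

lemma trace_eq: "trace m n (x::'a) = (\<Sum>i<n. x ^ (2 ^ (m * i)))"
  by (simp add: trace_def power_mult)

lemma trace_add: "trace m n ((x::'a) + y) = trace m n x + trace m n y"
  by (simp add: trace_eq frobenius_add sum.distrib)

lemma trace_Fq_mult: "c \<in> Fq \<Longrightarrow> trace m n ((c::'a) * x) = c * trace m n x"
  by (simp add: trace_eq power_mult_distrib Fq_power sum_distrib_left)

lemma trace_in_Fq: "trace m n (x::'a) \<in> Fq"
proof -
  have "trace m n x ^ (2 ^ m) = (\<Sum>i<n. x ^ (2 ^ (m * Suc i)))"
    by (simp add: trace_eq frobenius_sum algebra_simps flip: power_two_power_add)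
  also have "x + \<dots> = (\<Sum>i<Suc n. x ^ (2 ^ (m * i)))"
    by (simp only: sum.lessThan_Suc_shift) simp
  also have "\<dots> = trace m n x + x"
    by (simp add: trace_eq power_card)
  finally show ?thesis by (simp add: mem_Fq_iff)
qed

lemma trace_power_q: "trace m n ((x::'a) ^ (2 ^ m)) = trace m n x"
proof -
  have "trace m n (x ^ (2 ^ m)) = trace m n x ^ (2 ^ m)"
    by (simp add: trace_def frobenius_sum flip: power_mult) (simp add: mult.commute)
  then show ?thesis using trace_in_Fq[of x] by (simp add: mem_Fq_iff)
qed

lemma trace_power_q_power: "trace m n ((x::'a) ^ (2 ^ (m * k))) = trace m n x"
proof (induction k)
  case (Suc k)
  have "x ^ (2 ^ (m * Suc k)) = (x ^ (2 ^ (m * k))) ^ (2 ^ m)"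
    using power_two_power_add[of x "m * k" m] by (simp add: add.commute)
  then show ?case
    using Suc trace_power_q by simp
qed simp

lemma abs_trace_add: "abs_trace (m * n) ((x::'a) + y) = abs_trace (m * n) x + abs_trace (m * n) y"
  by (simp add: abs_trace_def frobenius_add sum.distrib)

lemma abs_trace_sum:
  "abs_trace (m * n) (\<Sum>i\<in>A. f i) = (\<Sum>i\<in>A. abs_trace (m * n) (f i :: 'a))"
  by (simp add: abs_trace_def frobenius_sum sum.swap[of _ A])

lemma abs_trace_square: "abs_trace (m * n) ((x::'a) ^ 2) = abs_trace (m * n) x"
proof -
  have "abs_trace (m * n) (x ^ 2) = (\<Sum>i<m * n. x ^ (2 ^ Suc i))"
    by (simp add: abs_trace_def mult.commute flip: power_mult)
  also have "x + \<dots> = (\<Sum>i<Suc (m * n). x ^ (2 ^ i))"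
    by (simp only: sum.lessThan_Suc_shift) simp
  also have "\<dots> = abs_trace (m * n) x + x"
    by (simp add: abs_trace_def power_card)
  finally show ?thesis by simp
qed

lemma abs_trace_power: "abs_trace (m * n) ((x::'a) ^ (2 ^ k)) = abs_trace (m * n) x"
proof (induction k)
  case (Suc k)
  have "x ^ (2 ^ Suc k) = (x ^ (2 ^ k)) ^ 2"
    using power_two_power_add[of x k 1] by simp
  then show ?case
    using Suc abs_trace_square by simp
qed simp

lemma trace_power_q_mult:
  "trace m n ((y::'a) ^ (2 ^ m) * d) = trace m n (y * d ^ (2 ^ (m * (n - 1))))"
proof -
  have "trace m n (y ^ (2 ^ m) * d) = trace m n ((y ^ (2 ^ m) * d) ^ (2 ^ (m * (n - 1))))"
    by (rule trace_power_q_power[symmetric])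
  then show ?thesis by (simp only: power_mult_distrib power_q_inverse)
qed

lemma abs_trace_power_q_mult:
  "abs_trace (m * n) ((y::'a) ^ (2 ^ m) * d) = abs_trace (m * n) (y * d ^ (2 ^ (m * (n - 1))))"
proof -
  have "abs_trace (m * n) (y ^ (2 ^ m) * d)
      = abs_trace (m * n) ((y ^ (2 ^ m) * d) ^ (2 ^ (m * (n - 1))))"
    by (rule abs_trace_power[symmetric])
  then show ?thesis by (simp only: power_mult_distrib power_q_inverse)
qed

lemma abs_trace_nonzero: "\<exists>z::'a. abs_trace (m * n) z \<noteq> 0"
proof -
  define p :: "'a poly" where "p = (\<Sum>i<m * n. monom 1 (2 ^ i))"
  have "coeff p 1 = 1"
    using extension_degree_pos by (simp add: p_def coeff_sum coeff_monom)
  then have "p \<noteq> 0" by auto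
  moreover have "degree p < card (UNIV :: 'a set)"
  proof -
    have "degree p \<le> 2 ^ (m * n - 1)"
      unfolding p_def by (rule degree_sum_le) (auto intro: order.trans[OF degree_monom_le])
    also have "\<dots> < card (UNIV :: 'a set)"
      using extension_degree_pos by (simp add: card_field)
    finally show ?thesis .
  qed
  ultimately obtain z where "poly p z \<noteq> 0" using poly_nonzero_somewhere by blast
  then show ?thesis by (auto simp: p_def poly_sum poly_monom abs_trace_def)
qed

lemma abs_trace_nondegenerate:
  assumes "\<And>y. abs_trace (m * n) ((x::'a) * y) = 0"
  shows "x = 0"
proof (rule ccontr)
  assume "x \<noteq> 0"
  obtain z :: 'a where "abs_trace (m * n) z \<noteq> 0" using abs_trace_nonzero by blast
  with \<open>x \<noteq> 0\<close> assms[of "z / x"] show False by simp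
qed

lemma lin2_add: "lin2 m n l ((x::'a) + y) = lin2 m n l x + lin2 m n l y"
  by (simp add: lin2_def frobenius_add distrib_left sum.distrib)

lemma additive_lin2: "additive (lin2 m n l :: 'a \<Rightarrow> 'a)"
  by unfold_locales (rule lin2_add)

lemma abs_trace_lin2_adjoint:
  "abs_trace (m * n) (lin2 m n l (x::'a) * y) = abs_trace (m * n) (x * adj2 m n l y)"
proof -
  have "abs_trace (m * n) (l j * x ^ (2 ^ j) * y)
      = abs_trace (m * n) (x * (l j * y) ^ (2 ^ ((m * n - j) mod (m * n))))"
    if "j < m * n" for j
  proof -
    define k where "k = (m * n - j) mod (m * n)"
    have "(j + k) mod (m * n) = 0"
      using that by (cases "j = 0") (simp_all add: k_def)
    then have "(x ^ (2 ^ j)) ^ (2 ^ k) = x"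
      using power_two_power_mod[of x "j + k"] by (simp add: power_two_power_add)
    then have "abs_trace (m * n) ((l j * x ^ (2 ^ j) * y) ^ (2 ^ k))
        = abs_trace (m * n) (x * (l j * y) ^ (2 ^ k))"
      by (simp add: power_mult_distrib mult_ac)
    then show ?thesis by (simp add: k_def abs_trace_power)
  qed
  then show ?thesis
    by (simp add: lin2_def adj2_def sum_distrib_left sum_distrib_right abs_trace_sum)
qed

end

section \<open>Odd degree extensions\<close>

locale odd_degree_extension = binary_field +
  assumes m_pos: "m \<ge> 1" and odd_n: "odd n"
begin

lemma of_nat_n: "(of_nat n :: 'a) = 1"
proof -
  obtain k where "n = 2 * k + 1" using odd_n oddE by blast
  then show ?thesis by (simp add: mult_2)
qed

lemma trace_Fq: "(c::'a) \<in> Fq \<Longrightarrow> trace m n c = c"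
  by (simp add: trace_eq Fq_power of_nat_n)

lemma Fq_if_power_q_square:
  assumes "(x::'a) ^ (2 ^ (2 * m)) = x"
  shows "x \<in> Fq"
proof -
  have even_powers: "x ^ (2 ^ (2 * m * k)) = x" for k
  proof (induction k)
    case (Suc k)
    then show ?case
      using assms power_two_power_add[of x "2 * m * k" "2 * m"] by (simp add: add.commute)
  qed simp
  obtain k where "n = 2 * k + 1" using odd_n oddE by blast
  then have "m * n = 2 * m * k + m" by simp
  then have "x = (x ^ (2 ^ (2 * m * k))) ^ (2 ^ m)"
    using power_card[of x] power_two_power_add[of x "2 * m * k" m] by simp
  then show ?thesis by (simp add: even_powers mem_Fq_iff)
qed

lemma abs_trace_trace:
  assumes "(c::'a) \<in> Fq"
  shows "abs_trace (m * n) (c * trace m n z) = abs_trace (m * n) (c * z)"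
proof -
  have "abs_trace (m * n) (c * trace m n z) = (\<Sum>i<n. abs_trace (m * n) ((c * z) ^ (2 ^ (m * i))))"
    using assms by (simp add: trace_eq sum_distrib_left abs_trace_sum power_mult_distrib Fq_power)
  also have "\<dots> = abs_trace (m * n) (c * z)"
    by (simp add: abs_trace_power of_nat_n)
  finally show ?thesis .
qed

lemma trace_surj:
  assumes "(c::'a) \<in> Fq"
  shows "\<exists>w. trace m n w = c"
proof -
  obtain z :: 'a where "abs_trace (m * n) z \<noteq> 0" using abs_trace_nonzero by blast
  then have "trace m n z \<noteq> 0"
    using abs_trace_trace[of 1 z] by (auto simp: mem_Fq_iff)
  moreover have "trace m n (c / trace m n z * z) = c / trace m n z * trace m n z"
    using assms trace_in_Fq Fq_divide trace_Fq_mult by blast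
  ultimately show ?thesis by auto
qed

lemma abs_trace_Fq_nondegenerate:
  assumes "(c::'a) \<in> Fq" and "c \<noteq> 0"
  shows "\<exists>e\<in>Fq. abs_trace (m * n) (c * e) \<noteq> 0"
proof -
  obtain z where "abs_trace (m * n) (c * z) \<noteq> 0"
    using abs_trace_nondegenerate assms(2) by blast
  then show ?thesis
    using abs_trace_trace[OF assms(1)] trace_in_Fq by metis
qed

lemma card_Fq: "card Fq \<le> 2 ^ m"
proof -
  define p :: "'a poly" where "p = monom 1 (2 ^ m) - [:0, 1:]"
  have "coeff p (2 ^ m) = 1"
    using m_pos by (simp add: p_def coeff_pCons split: nat.split)
  then have "p \<noteq> 0" by auto
  moreover have "degree p \<le> 2 ^ m" unfolding p_def
    by (rule degree_diff_le) (auto simp: degree_monom_le intro: order.trans[of _ 1])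
  moreover have "{x. poly p x = 0} = Fq" by (auto simp: p_def mem_Fq_iff poly_monom)
  ultimately show ?thesis using card_poly_roots_bound[of p] by simp
qed

lemma mem_Fq_iff_orthogonal_ker_trace:
  "(x::'a) \<in> Fq \<longleftrightarrow> (\<forall>k. trace m n k = 0 \<longrightarrow> abs_trace (m * n) (x * k) = 0)"
proof
  show "x \<in> Fq \<Longrightarrow> \<forall>k. trace m n k = 0 \<longrightarrow> abs_trace (m * n) (x * k) = 0"
    using abs_trace_trace[of x] by (metis abs_trace_zero mult_zero_right)
next
  assume orth: "\<forall>k. trace m n k = 0 \<longrightarrow> abs_trace (m * n) (x * k) = 0"
  have "abs_trace (m * n) ((x ^ (2 ^ (m * (n - 1))) + x) * w) = 0" for w
  proof -
    have "trace m n (w ^ (2 ^ m) + w) = 0"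
      by (simp add: trace_add trace_power_q)
    then have "abs_trace (m * n) (x * (w ^ (2 ^ m) + w)) = 0"
      using orth by blast
    moreover have "abs_trace (m * n) (x * w ^ (2 ^ m)) = abs_trace (m * n) (x ^ (2 ^ (m * (n - 1))) * w)"
      using abs_trace_power_q_mult[of w x] by (simp add: mult.commute)
    ultimately show ?thesis
      by (simp add: distrib_left distrib_right abs_trace_add)
  qed
  then have "x ^ (2 ^ (m * (n - 1))) = x"
    using abs_trace_nondegenerate add_eq_0_iff_eq by blast
  then show "x \<in> Fq"
    using power_q_inverse(1)[of x] by (simp add: mem_Fq_iff)
qed

section \<open>The permutation criterion\<close>

lemma trace_power_q_plus_1_add:
  "trace m n (((y::'a) + d) ^ (2 ^ m + 1)) = trace m n (y ^ (2 ^ m + 1)) + trace m n (d ^ (2 ^ m + 1))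
     + trace m n (y ^ (2 ^ m) * d + y * d ^ (2 ^ m))"
proof -
  have "(y + d) ^ (2 ^ m + 1) = (y ^ (2 ^ m) + d ^ (2 ^ m)) * (y + d)"
    by (simp add: frobenius_add)
  also have "\<dots> = y ^ (2 ^ m + 1) + d ^ (2 ^ m + 1) + (y ^ (2 ^ m) * d + y * d ^ (2 ^ m))"
    by (simp add: algebra_simps)
  finally show ?thesis by (simp add: trace_add)
qed

lemma trace_power_q_plus_1_Fq:
  assumes "(d::'a) \<in> Fq"
  shows "trace m n (d ^ (2 ^ m + 1)) = d ^ 2"
proof -
  have "d ^ (2 ^ m + 1) = d ^ 2"
    using assms by (simp add: mem_Fq_iff power_add power2_eq_square)
  then show ?thesis by (simp add: trace_Fq Fq_square assms)
qed

lemma polar_form_Fq: "(d::'a) \<in> Fq \<Longrightarrow> trace m n (y ^ (2 ^ m) * d + y * d ^ (2 ^ m)) = 0"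
  by (simp add: mem_Fq_iff trace_add trace_Fq_mult[of d] trace_power_q mult.commute[of _ d])

lemma polar_form_surj:
  assumes "(d::'a) \<notin> Fq" and "c \<in> Fq"
  shows "\<exists>y. trace m n (y ^ (2 ^ m) * d + y * d ^ (2 ^ m)) = c"
proof -
  \<comment> \<open>Moving the Frobenius from y to d turns the form into y \<mapsto> Tr(y e).\<close>
  define e where "e = d ^ (2 ^ (m * (n - 1))) + d ^ (2 ^ m)"
  have "e \<noteq> 0"
  proof
    assume "e = 0"
    then have "(d ^ (2 ^ (m * (n - 1)))) ^ (2 ^ m) = (d ^ (2 ^ m)) ^ (2 ^ m)"
      by (simp add: e_def add_eq_0_iff_eq)
    then have "d ^ (2 ^ (2 * m)) = d"
      using power_q_inverse(1)[of d] power_two_power_add[of d m m] by (simp add: mult_2)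
    then show False using assms(1) Fq_if_power_q_square by blast
  qed
  obtain w where "trace m n w = c" using trace_surj assms(2) by blast
  moreover have "trace m n (y ^ (2 ^ m) * d + y * d ^ (2 ^ m)) = trace m n (y * e)" for y
    by (simp add: e_def trace_add trace_power_q_mult distrib_left)
  ultimately have "trace m n ((w / e) ^ (2 ^ m) * d + w / e * d ^ (2 ^ m)) = c"
    using \<open>e \<noteq> 0\<close> by (simp only:) simp
  then show ?thesis ..
qed

definition pp_criterion :: "('a \<Rightarrow> 'a) \<Rightarrow> bool" where
  "pp_criterion M \<longleftrightarrow> (\<forall>d. M d \<in> Fq \<longrightarrow> d \<in> Fq) \<and> (\<forall>d\<in>Fq. d \<noteq> 0 \<longrightarrow> M d \<noteq> d ^ 2)"

lemma increment_vanishes_iff: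
  assumes "additive M"
  defines "f \<equiv> \<lambda>x. trace m n (x ^ (2 ^ m + 1)) + M x"
  shows "(\<exists>y. f (y + d) = f y) \<longleftrightarrow> (d \<in> Fq \<and> M d = d ^ 2) \<or> (d \<notin> Fq \<and> M d \<in> Fq)"
proof -
  have shift: "f (y + d) = f y \<longleftrightarrow>
      trace m n (y ^ (2 ^ m) * d + y * d ^ (2 ^ m)) = trace m n (d ^ (2 ^ m + 1)) + M d" for y
  proof -
    have "f (y + d) = f y + (trace m n (y ^ (2 ^ m) * d + y * d ^ (2 ^ m))
        + (trace m n (d ^ (2 ^ m + 1)) + M d))"
      unfolding f_def trace_power_q_plus_1_add additive.add[OF assms(1)] by (simp add: ac_simps)
    then show ?thesis by (simp add: add_eq_0_iff_eq)
  qed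
  show ?thesis
  proof (cases "d \<in> Fq")
    case True
    have "f (y + d) = f y \<longleftrightarrow> M d = d ^ 2" for y
      unfolding shift trace_power_q_plus_1_Fq[OF True] polar_form_Fq[OF True]
      using add_eq_0_iff_eq[of "d ^ 2" "M d"] by (metis eq_commute)
    with True show ?thesis by blast
  next
    case False
    have "M d = trace m n (d ^ (2 ^ m + 1)) + (trace m n (d ^ (2 ^ m + 1)) + M d)"
      by (simp flip: add.assoc)
    then have "M d \<in> Fq \<longleftrightarrow> trace m n (d ^ (2 ^ m + 1)) + M d \<in> Fq"
      using Fq_add trace_in_Fq by metis
    also have "\<dots> \<longleftrightarrow> (\<exists>y. f (y + d) = f y)"
      unfolding shift using polar_form_surj[OF False] trace_in_Fq by metis
    finally show ?thesis using False by blast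
  qed
qed

lemma bij_iff_pp_criterion:
  assumes "additive M"
  shows "bij (\<lambda>x. trace m n (x ^ (2 ^ m + 1)) + M x) \<longleftrightarrow> pp_criterion M"
    (is "bij ?f \<longleftrightarrow> _")
proof -
  have "bij ?f \<longleftrightarrow> inj ?f"
    using finite_UNIV_inj_surj[OF finite_UNIV, of ?f] by (auto simp: bij_def)
  also have "\<dots> \<longleftrightarrow> (\<forall>d. d \<noteq> 0 \<longrightarrow> \<not> (\<exists>y. ?f (y + d) = ?f y))"
    unfolding inj_iff_increments by blast
  also have "\<dots> \<longleftrightarrow> (\<forall>d. d \<noteq> 0 \<longrightarrow> \<not> ((d \<in> Fq \<and> M d = d ^ 2) \<or> (d \<notin> Fq \<and> M d \<in> Fq)))"
    by (simp only: increment_vanishes_iff[OF assms])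
  also have "\<dots> \<longleftrightarrow> pp_criterion M"
    unfolding pp_criterion_def using Fq_zero by (auto; metis)
  finally show ?thesis .
qed

section \<open>Transfer of the criterion\<close>

lemma card_kernel_le:
  assumes "pp_criterion M"
  shows "card {x. M x = 0} \<le> 2 ^ m"
proof -
  have "{x. M x = 0} \<subseteq> Fq" using assms Fq_zero by (auto simp: pp_criterion_def)
  then have "card {x. M x = 0} \<le> card Fq" by (simp add: card_mono)
  then show ?thesis using card_Fq by linarith
qed

lemma pp_criterion_comp:
  assumes M: "pp_criterion M"
    and fixes_Fq: "\<And>c. c \<in> Fq \<Longrightarrow> \<Lambda> c = c"
    and preimage_Fq: "\<And>x. \<Lambda> x \<in> Fq \<Longrightarrow> x \<in> Fq"
  shows "pp_criterion (\<lambda>x. M (\<Lambda> x))" and "pp_criterion (\<lambda>x. \<Lambda> (M x))"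
proof -
  from M have M_pre: "M d \<in> Fq \<Longrightarrow> d \<in> Fq" and M_sq: "d \<in> Fq \<Longrightarrow> d \<noteq> 0 \<Longrightarrow> M d \<noteq> d ^ 2" for d
    by (simp_all add: pp_criterion_def)
  show "pp_criterion (\<lambda>x. M (\<Lambda> x))"
    unfolding pp_criterion_def using M_pre M_sq preimage_Fq fixes_Fq by metis
  have "\<Lambda> (M d) \<noteq> d ^ 2" if "d \<in> Fq" "d \<noteq> 0" for d
  proof
    assume eq: "\<Lambda> (M d) = d ^ 2"
    then have "M d \<in> Fq" using preimage_Fq Fq_square[OF \<open>d \<in> Fq\<close>] by metis
    then have "M d = d ^ 2" using eq fixes_Fq by simp
    then show False using M_sq that by blast
  qed
  then show "pp_criterion (\<lambda>x. \<Lambda> (M x))"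
    unfolding pp_criterion_def using M_pre preimage_Fq by blast
qed

lemma pp_criterion_twist_argument:
  assumes L: "pp_criterion L" "additive L"
    and \<phi>: "additive \<phi>" "\<And>x. \<phi> x \<in> Fq" "\<And>c. c \<in> Fq \<Longrightarrow> \<phi> c = c \<Longrightarrow> c = 0"
  shows "pp_criterion (\<lambda>x. L x + L (\<phi> x) + \<phi> x ^ 2)"
  unfolding pp_criterion_def
proof (intro conjI allI impI ballI)
  fix d
  have twist: "L (d + \<phi> d) = (L d + L (\<phi> d) + \<phi> d ^ 2) + \<phi> d ^ 2"
    by (simp add: additive.add[OF L(2)] add.assoc)
  show "d \<in> Fq" if "L d + L (\<phi> d) + \<phi> d ^ 2 \<in> Fq"
  proof -
    have "L (d + \<phi> d) \<in> Fq"
      unfolding twist by (rule Fq_add[OF that Fq_square[OF \<phi>(2)]])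
    then have "d + \<phi> d \<in> Fq" using L(1) by (simp add: pp_criterion_def)
    moreover have "d = (d + \<phi> d) + \<phi> d" by (simp add: add.assoc)
    ultimately show ?thesis using \<phi>(2) Fq_add by metis
  qed
  show "L d + L (\<phi> d) + \<phi> d ^ 2 \<noteq> d ^ 2" if "d \<in> Fq" "d \<noteq> 0"
  proof
    assume "L d + L (\<phi> d) + \<phi> d ^ 2 = d ^ 2"
    then have "L (d + \<phi> d) = (d + \<phi> d) ^ 2"
      by (simp add: twist square_add)
    moreover have "d + \<phi> d \<noteq> 0"
      using \<phi>(3) that by (auto simp: add_eq_0_iff_eq)
    ultimately show False
      using L(1) Fq_add[OF that(1) \<phi>(2)] by (simp add: pp_criterion_def)
  qed
qed

lemma pp_criterion_twist_value:
  assumes L: "pp_criterion L"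
    and \<phi>: "additive \<phi>" "\<And>x. \<phi> x \<in> Fq" "\<And>c. c \<in> Fq \<Longrightarrow> \<phi> c = c \<Longrightarrow> c = 0"
  shows "pp_criterion (\<lambda>x. L x + \<phi> (L x) + \<phi> (x ^ 2))"
  unfolding pp_criterion_def
proof (intro conjI allI impI ballI)
  fix d
  have L_Fq: "L d \<in> Fq" if "L d + \<phi> (L d) + \<phi> (d ^ 2) \<in> Fq"
  proof -
    have "L d = (L d + \<phi> (L d) + \<phi> (d ^ 2)) + \<phi> (d ^ 2) + \<phi> (L d)"
      by (simp add: ac_simps)
    then show ?thesis using that \<phi>(2) Fq_add by metis
  qed
  then show "d \<in> Fq" if "L d + \<phi> (L d) + \<phi> (d ^ 2) \<in> Fq"
    using L that by (simp add: pp_criterion_def)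
  show "L d + \<phi> (L d) + \<phi> (d ^ 2) \<noteq> d ^ 2" if "d \<in> Fq" "d \<noteq> 0"
  proof
    assume eq: "L d + \<phi> (L d) + \<phi> (d ^ 2) = d ^ 2"
    define e where "e = L d + d ^ 2"
    have "e \<in> Fq"
      unfolding e_def using L_Fq eq Fq_square[OF that(1)] Fq_add by metis
    have "e + \<phi> e = (L d + \<phi> (L d) + \<phi> (d ^ 2)) + d ^ 2"
      by (simp add: e_def additive.add[OF \<phi>(1)] ac_simps)
    with eq have "e + \<phi> e = 0" by simp
    with \<open>e \<in> Fq\<close> have "e = 0" using \<phi>(3) add_eq_0_iff_eq by metis
    then have "L d = d ^ 2" by (simp add: e_def add_eq_0_iff_eq)
    then show False using L that by (simp add: pp_criterion_def)
  qed
qed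

lemma lin2_fixes_Fq:
  assumes trace_adj: "\<And>x. trace m n (adj2 m n l x) = trace m n x" and c: "(c::'a) \<in> Fq"
  shows "lin2 m n l c = c"
proof -
  have "abs_trace (m * n) ((lin2 m n l c + c) * y) = 0" for y
  proof -
    have "abs_trace (m * n) (lin2 m n l c * y) = abs_trace (m * n) (c * trace m n (adj2 m n l y))"
      by (simp add: abs_trace_lin2_adjoint abs_trace_trace[OF c])
    also have "\<dots> = abs_trace (m * n) (c * y)"
      by (simp add: trace_adj abs_trace_trace[OF c])
    finally show ?thesis by (simp add: distrib_right abs_trace_add)
  qed
  then show ?thesis using abs_trace_nondegenerate add_eq_0_iff_eq by blast
qed

lemma lin2_preimage_Fq:
  assumes ker_trace: "{k. trace m n k = 0} \<subseteq> adj2 m n l ` {k. trace m n k = 0}"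
    and "lin2 m n l (x::'a) \<in> Fq"
  shows "x \<in> Fq"
  unfolding mem_Fq_iff_orthogonal_ker_trace
proof (intro allI impI)
  fix k :: 'a
  assume "trace m n k = 0"
  then obtain k' where k': "trace m n k' = 0" "k = adj2 m n l k'" using ker_trace by blast
  then have "abs_trace (m * n) (x * k) = abs_trace (m * n) (lin2 m n l x * k')"
    by (simp add: abs_trace_lin2_adjoint)
  also have "\<dots> = 0"
    using assms(2) k'(1) mem_Fq_iff_orthogonal_ker_trace by blast
  finally show "abs_trace (m * n) (x * k) = 0" .
qed

lemma trace_lin2_fixed_point_eq_0:
  assumes surj: "Fq \<subseteq> (\<lambda>x. x + trace m n (adj2 m n l x)) ` Fq"
    and c: "(c::'a) \<in> Fq" and fixed: "trace m n (lin2 m n l c) = c"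
  shows "c = 0"
proof -
  have "abs_trace (m * n) (c * e) = 0" if "e \<in> Fq" for e
  proof -
    obtain d where d: "d \<in> Fq" "e = d + trace m n (adj2 m n l d)"
      using surj \<open>e \<in> Fq\<close> by blast
    have "abs_trace (m * n) (c * trace m n (adj2 m n l d)) = abs_trace (m * n) (lin2 m n l c * d)"
      by (simp add: abs_trace_trace[OF c] abs_trace_lin2_adjoint)
    also have "\<dots> = abs_trace (m * n) (d * trace m n (lin2 m n l c))"
      by (simp add: abs_trace_trace[OF d(1)] mult.commute)
    also have "\<dots> = abs_trace (m * n) (c * d)"
      by (simp add: fixed mult.commute)
    finally show ?thesis by (simp add: d(2) distrib_left abs_trace_add)
  qed
  then show "c = 0" using abs_trace_Fq_nondegenerate c by blast
qed

lemma bij_lin2_compositions: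
  assumes L: "pp_criterion (lin2 m n a)"
    and ker_trace: "adj2 m n l ` {x. trace m n x = 0} = {x::'a. trace m n x = 0}"
    and trace_adj: "\<forall>x::'a. trace m n (adj2 m n l x) = trace m n x"
  shows "bij (\<lambda>x. trace m n (x ^ (2 ^ m + 1)) + lin2 m n a (lin2 m n l x))"
    and "bij (\<lambda>x. trace m n (x ^ (2 ^ m + 1)) + lin2 m n l (lin2 m n a x))"
proof -
  have fixes_Fq: "\<And>c. c \<in> Fq \<Longrightarrow> lin2 m n l c = c"
    using lin2_fixes_Fq trace_adj by blast
  have preimage_Fq: "\<And>x. lin2 m n l x \<in> Fq \<Longrightarrow> x \<in> Fq"
    using lin2_preimage_Fq ker_trace by blast
  have "additive (\<lambda>x. lin2 m n a (lin2 m n l x))" "additive (\<lambda>x. lin2 m n l (lin2 m n a x))"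
    by (simp_all add: additive_def lin2_add)
  with pp_criterion_comp[OF L fixes_Fq preimage_Fq]
  show "bij (\<lambda>x. trace m n (x ^ (2 ^ m + 1)) + lin2 m n a (lin2 m n l x))"
    and "bij (\<lambda>x. trace m n (x ^ (2 ^ m + 1)) + lin2 m n l (lin2 m n a x))"
    by (simp_all only: bij_iff_pp_criterion)
qed

lemma bij_trace_twists:
  assumes L: "pp_criterion (lin2 m n a)"
    and perm_Fq: "bij_betw (\<lambda>x::'a. x + trace m n (adj2 m n l x)) Fq Fq"
  shows "bij (\<lambda>x. trace m n (x ^ (2 ^ m + 1)) + lin2 m n a x
                 + lin2 m n a (trace m n (lin2 m n l x)) + (trace m n (lin2 m n l x)) ^ 2)"
    and "bij (\<lambda>x. trace m n (x ^ (2 ^ m + 1)) + lin2 m n a x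
                 + trace m n (lin2 m n l (lin2 m n a x)) + trace m n (lin2 m n l (x ^ 2)))"
proof -
  let ?L = "lin2 m n a" and ?\<phi> = "\<lambda>x. trace m n (lin2 m n l x)"
  from perm_Fq have "Fq \<subseteq> (\<lambda>x. x + trace m n (adj2 m n l x)) ` Fq"
    by (simp add: bij_betw_def)
  then have \<phi>: "additive ?\<phi>" "\<And>x. ?\<phi> x \<in> Fq" "\<And>c. c \<in> Fq \<Longrightarrow> ?\<phi> c = c \<Longrightarrow> c = 0"
    using trace_lin2_fixed_point_eq_0 trace_in_Fq by (auto simp: additive_def lin2_add trace_add)
  have "additive (\<lambda>x. ?L x + ?L (?\<phi> x) + ?\<phi> x ^ 2)"
    and "additive (\<lambda>x. ?L x + ?\<phi> (?L x) + ?\<phi> (x ^ 2))"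
    by (simp_all add: additive_def lin2_add trace_add square_add ac_simps)
  with pp_criterion_twist_argument[OF L additive_lin2 \<phi>] pp_criterion_twist_value[OF L \<phi>]
  have "bij (\<lambda>x. trace m n (x ^ (2 ^ m + 1)) + (?L x + ?L (?\<phi> x) + ?\<phi> x ^ 2))"
    and "bij (\<lambda>x. trace m n (x ^ (2 ^ m + 1)) + (?L x + ?\<phi> (?L x) + ?\<phi> (x ^ 2)))"
    by (simp_all only: bij_iff_pp_criterion)
  then show "bij (\<lambda>x. trace m n (x ^ (2 ^ m + 1)) + ?L x + ?L (?\<phi> x) + ?\<phi> x ^ 2)"
    and "bij (\<lambda>x. trace m n (x ^ (2 ^ m + 1)) + ?L x + ?\<phi> (?L x) + ?\<phi> (x ^ 2))"
    by (simp_all only: add.assoc)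
qed

end

theorem mainTheorem9:
  fixes m n :: nat and a l :: "nat \<Rightarrow> 'a::{field,finite}"
  assumes "m \<ge> 1"
    and "odd n"
    and "card (UNIV :: 'a set) = 2 ^ (m * n)"
    and perm: "bij (\<lambda>x::'a. trace m n (x ^ (2 ^ m + 1)) + lin2 m n a x)"
  shows "card {x::'a. lin2 m n a x = 0} \<le> 2 ^ m
    \<and> ((adj2 m n l ` {x::'a. trace m n x = 0} = {x. trace m n x = 0}
         \<and> (\<forall>x::'a. trace m n (adj2 m n l x) = trace m n x)) \<longrightarrow>
         bij (\<lambda>x::'a. trace m n (x ^ (2 ^ m + 1)) + lin2 m n a (lin2 m n l x))
         \<and> bij (\<lambda>x::'a. trace m n (x ^ (2 ^ m + 1)) + lin2 m n l (lin2 m n a x)))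
    \<and> (bij_betw (\<lambda>x::'a. x + trace m n (adj2 m n l x)) (subfield_q m) (subfield_q m) \<longrightarrow>
         bij (\<lambda>x::'a. trace m n (x ^ (2 ^ m + 1)) + lin2 m n a x
                 + lin2 m n a (trace m n (lin2 m n l x)) + (trace m n (lin2 m n l x)) ^ 2)
         \<and> bij (\<lambda>x::'a. trace m n (x ^ (2 ^ m + 1)) + lin2 m n a x
                 + trace m n (lin2 m n l (lin2 m n a x)) + trace m n (lin2 m n l (x ^ 2))))"
proof -
  interpret odd_degree_extension m n "TYPE('a)"
    using assms(1-3) by unfold_locales
  have L: "pp_criterion (lin2 m n a)"
    using perm by (simp only: bij_iff_pp_criterion[OF additive_lin2])
  show ?thesis
    using card_kernel_le[OF L] bij_lin2_compositions[OF L] bij_trace_twists[OF L] by blast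
qed

end
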